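(* Let $X$ be a Banach space with a (Schauder) basis $(x_i)$. Then for every $n\in\mathbb{N}$ there is an equivalent norm $|\cdot|_n$ on $X$ such that, in $(X,|\cdot|_n)$, the basis $(x_i)$ is block $n$-unconditional with constant $2$.
   Context: A basic sequence $(x_i)$ is block $n$-unconditional with constant $K$ if every block basis $(y_i)_{i=1}^n$ of $(x_i)$ of length $n$ satisfies $\|\sum_{i=1}^n \pm a_i y_i\|\le K\|\sum_{i=1}^n a_iy_i\|$ for all real scalars $(a_i)_{i=1}^n$ and all choices of signs. *)

theory Defs
  imports "HOL-Analysis.Analysis"
begin

definition schauder_basis :: "(nat \<Rightarrow> 'a::banach) \<Rightarrow> bool" where
  "schauder_basis x \<longleftrightarrow>
     (\<forall>v. \<exists>!a::nat \<Rightarrow> real. (\<lambda>m. \<Sum>i<m. a i *\<^sub>R x i) \<longlonglongrightarrow> v)"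

definition is_norm :: "('a::real_vector \<Rightarrow> real) \<Rightarrow> bool" where
  "is_norm N \<longleftrightarrow>
     (\<forall>v. 0 \<le> N v) \<and> (\<forall>v. N v = 0 \<longleftrightarrow> v = 0) \<and>
     (\<forall>c v. N (c *\<^sub>R v) = \<bar>c\<bar> * N v) \<and>
     (\<forall>v w. N (v + w) \<le> N v + N w)"

definition equivalent_norm :: "('a::real_normed_vector \<Rightarrow> real) \<Rightarrow> bool" where
  "equivalent_norm N \<longleftrightarrow> is_norm N \<and>
     (\<exists>c C. 0 < c \<and> 0 < C \<and> (\<forall>v. c * norm v \<le> N v \<and> N v \<le> C * norm v))"

definition block_basis_of :: "(nat \<Rightarrow> 'a::real_vector) \<Rightarrow> nat \<Rightarrow> (nat \<Rightarrow> 'a) \<Rightarrow> bool" where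
  "block_basis_of x n y \<longleftrightarrow>
     (\<exists>p::nat \<Rightarrow> nat. \<exists>b::nat \<Rightarrow> real. strict_mono p \<and>
        (\<forall>k<n. y k = (\<Sum>i\<in>{p k..<p (Suc k)}. b i *\<^sub>R x i) \<and> y k \<noteq> 0))"

definition block_n_unconditional ::
  "('a::real_vector \<Rightarrow> real) \<Rightarrow> (nat \<Rightarrow> 'a) \<Rightarrow> nat \<Rightarrow> real \<Rightarrow> bool" where
  "block_n_unconditional N x n K \<longleftrightarrow>
     (\<forall>y. block_basis_of x n y \<longrightarrow>
        (\<forall>(a::nat \<Rightarrow> real) (\<epsilon>::nat \<Rightarrow> real). (\<forall>k<n. \<epsilon> k \<in> {-1, 1}) \<longrightarrow>
           N (\<Sum>k<n. (\<epsilon> k * a k) *\<^sub>R y k) \<le> K * N (\<Sum>k<n. a k *\<^sub>R y k)))"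

end

theory Submission
  imports Defs
begin

(* Let P_m be the partial sum projections of the basis. The norm sup_m ||P_m v|| is complete
   and dominates ||v||, so by a Baire category argument it is equivalent to ||v||: the P_m are
   uniformly bounded. Call g admissible (sign_pattern n g) if it is +-1 on an interval, 0
   outside it, and changes sign fewer than n times. By Abel summation the multiplier
   M_g v = sum_i g_i v_i x_i is a combination of at most n + 1 projections with coefficients
   of modulus at most 2, so |v|_n = sup_g ||M_g v|| (pattern_norm n) is an equivalent norm;
   initial segment indicators give |v|_n >= ||v||. Changing the signs of a block basis of
   length n is a multiplier M_E with E admissible, and for admissible g the product g E
   changes sign at most 2n - 2 times, so cutting it at a suitable point writes it as a sum of
   two admissible sequences. Hence |M_E v|_n <= 2 |v|_n. *)

section \<open>Supremum norms of families of linear operators\<close>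

definition sup_norm :: "('a \<Rightarrow> 'b::real_normed_vector) set \<Rightarrow> 'a \<Rightarrow> real" where
  "sup_norm \<T> v = (SUP T\<in>\<T>. norm (T v))"

locale pointwise_bounded_linear_family =
  fixes \<T> :: "('a::real_normed_vector \<Rightarrow> 'b::real_normed_vector) set"
  assumes nonempty: "\<T> \<noteq> {}"
    and linear_ops: "T \<in> \<T> \<Longrightarrow> linear T"
    and pointwise_bounded: "bdd_above ((\<lambda>T. norm (T v)) ` \<T>)"
begin

lemma norm_le_sup_norm: "T \<in> \<T> \<Longrightarrow> norm (T v) \<le> sup_norm \<T> v"
  unfolding sup_norm_def by (rule cSUP_upper[OF _ pointwise_bounded])

lemma sup_norm_least: "(\<And>T. T \<in> \<T> \<Longrightarrow> norm (T v) \<le> B) \<Longrightarrow> sup_norm \<T> v \<le> B"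
  unfolding sup_norm_def using nonempty by (rule cSUP_least)

lemma sup_norm_nonneg: "0 \<le> sup_norm \<T> v"
  using nonempty norm_le_sup_norm norm_ge_zero order_trans by blast

lemma sup_norm_triangle: "sup_norm \<T> (v + w) \<le> sup_norm \<T> v + sup_norm \<T> w"
proof (rule sup_norm_least)
  fix T
  assume "T \<in> \<T>"
  then have "norm (T (v + w)) \<le> norm (T v) + norm (T w)"
    by (simp add: linear_add[OF linear_ops] norm_triangle_ineq)
  also have "\<dots> \<le> sup_norm \<T> v + sup_norm \<T> w"
    using \<open>T \<in> \<T>\<close> by (intro add_mono norm_le_sup_norm)
  finally show "norm (T (v + w)) \<le> sup_norm \<T> v + sup_norm \<T> w" .
qed

lemma sup_norm_scaleR: "sup_norm \<T> (c *\<^sub>R v) = \<bar>c\<bar> * sup_norm \<T> v"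
proof (rule antisym)
  show "sup_norm \<T> (c *\<^sub>R v) \<le> \<bar>c\<bar> * sup_norm \<T> v"
    by (rule sup_norm_least) (simp add: linear_scale[OF linear_ops] mult_left_mono norm_le_sup_norm)
  show "\<bar>c\<bar> * sup_norm \<T> v \<le> sup_norm \<T> (c *\<^sub>R v)"
  proof (cases "c = 0")
    case True
    then show ?thesis by (simp add: sup_norm_nonneg)
  next
    case False
    have "sup_norm \<T> v \<le> sup_norm \<T> (c *\<^sub>R v) / \<bar>c\<bar>"
    proof (rule sup_norm_least)
      fix T
      assume "T \<in> \<T>"
      then have "\<bar>c\<bar> * norm (T v) \<le> sup_norm \<T> (c *\<^sub>R v)"
        using norm_le_sup_norm[of T "c *\<^sub>R v"] by (simp add: linear_scale[OF linear_ops])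
      then show "norm (T v) \<le> sup_norm \<T> (c *\<^sub>R v) / \<bar>c\<bar>"
        using False by (simp add: field_simps)
    qed
    then show ?thesis using False by (simp add: field_simps)
  qed
qed

lemma equivalent_norm_sup_norm:
  assumes lower: "\<And>v. norm v \<le> sup_norm \<T> v"
    and upper: "\<And>T v. T \<in> \<T> \<Longrightarrow> norm (T v) \<le> C * norm v" and "0 < C"
  shows "equivalent_norm (sup_norm \<T>)"
proof -
  have "is_norm (sup_norm \<T>)"
    unfolding is_norm_def
  proof (intro conjI allI)
    fix v
    show "0 \<le> sup_norm \<T> v" by (rule sup_norm_nonneg)
    show "sup_norm \<T> v = 0 \<longleftrightarrow> v = 0"
      using lower[of v] sup_norm_scaleR[of 0 0] by auto
  qed (simp_all add: sup_norm_scaleR sup_norm_triangle)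
  moreover have "sup_norm \<T> v \<le> C * norm v" for v
    by (rule sup_norm_least) (rule upper)
  ultimately show ?thesis
    unfolding equivalent_norm_def using lower \<open>0 < C\<close> by (intro conjI exI[of _ 1] exI[of _ C]) auto
qed

end

section \<open>Comparable complete norms\<close>

locale complete_stronger_norm =
  fixes N :: "'a::banach \<Rightarrow> real"
  assumes norm_le: "norm v \<le> N v"
    and triangle: "N (v + w) \<le> N v + N w"
    and scaleR: "N (c *\<^sub>R v) = \<bar>c\<bar> * N v"
    and complete: "(\<And>e. e > 0 \<Longrightarrow> \<exists>J. \<forall>j\<ge>J. \<forall>l\<ge>J. N (u j - u l) < e) \<Longrightarrow>
      \<exists>v. (\<lambda>j. N (u j - v)) \<longlonglongrightarrow> 0"
begin

lemma nonneg: "0 \<le> N v"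
  using norm_le[of v] norm_ge_zero order_trans by blast

lemma zero [simp]: "N 0 = 0"
  using scaleR[of 0 0] by simp

lemma diff_commute: "N (v - w) = N (w - v)"
  using scaleR[of "-1" "v - w"] by simp

lemma sum_le: "N (\<Sum>i\<in>A. f i) \<le> (\<Sum>i\<in>A. N (f i))"
proof (induction A rule: infinite_finite_induct)
  case (insert a A)
  then show ?case using triangle[of "f a" "sum f A"] by simp
qed simp_all

lemma sublevel_closure_has_interior: "\<exists>k::nat. interior (closure {v. N v \<le> real k}) \<noteq> {}"
proof (rule ccontr)
  assume no_interior: "\<not> ?thesis"
  define E where "E k = closure {v. N v \<le> real k}" for k :: nat
  have "euclidean interior_of \<Union>(range E) = {}"
  proof (rule Baire_category_alt)
    show "completely_metrizable_space (euclidean :: 'a topology) \<or>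
        locally_compact_space (euclidean :: 'a topology) \<and> regular_space (euclidean :: 'a topology)"
      using completely_metrizable_space_euclidean by blast
    fix T
    assume "T \<in> range E"
    then have "closed T" "interior T = {}" using no_interior by (auto simp: E_def)
    then show "closedin euclidean T \<and> euclidean interior_of T = {}"
      using closed_closedin[of T] euclidean_interior_of[of T] by (simp only:)
  qed simp
  moreover have "v \<in> E (nat \<lceil>N v\<rceil>)" for v
    unfolding E_def by (rule subsetD[OF closure_subset]) (simp add: real_nat_ceiling_ge)
  then have "\<Union>(range E) = UNIV" by blast
  ultimately show False by simp
qed

lemma small_vectors_approximable:
  obtains k r where "0 \<le> k" "0 < r"
    and "\<And>w \<delta>. norm w < r \<Longrightarrow> 0 < \<delta> \<Longrightarrow> \<exists>u. N u \<le> k \<and> norm (w - u) < \<delta>"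
proof -
  obtain k :: nat and v0 where "v0 \<in> interior (closure {v. N v \<le> real k})"
    using sublevel_closure_has_interior by blast
  then obtain r where r: "0 < r" and ball: "ball v0 r \<subseteq> closure {v. N v \<le> real k}"
    unfolding mem_interior by blast
  have near: "\<exists>u. N u \<le> 2 * k \<and> norm (w - u) < \<delta>" if "norm w < r" "0 < \<delta>" for w \<delta>
  proof -
    have "v0 + w \<in> closure {v. N v \<le> real k}"
      by (rule subsetD[OF ball]) (simp add: dist_norm that(1))
    then obtain a1 where a1: "N a1 \<le> k" "dist a1 (v0 + w) < \<delta>/2"
      using half_gt_zero[OF \<open>0 < \<delta>\<close>] unfolding closure_approachable by blast
    have "v0 \<in> closure {v. N v \<le> real k}"
      by (rule subsetD[OF ball]) (simp add: r)
    then obtain a0 where a0: "N a0 \<le> k" "dist a0 v0 < \<delta>/2"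
      using half_gt_zero[OF \<open>0 < \<delta>\<close>] unfolding closure_approachable by blast
    have "N (a1 - a0) \<le> N a1 + N a0"
      using triangle[of a1 "- a0"] scaleR[of "-1" a0] by simp
    moreover have "norm (w - (a1 - a0)) \<le> dist a1 (v0 + w) + dist a0 v0"
      using norm_triangle_ineq4[of "v0 + w - a1" "v0 - a0"]
      by (simp add: dist_norm norm_minus_commute algebra_simps)
    ultimately show ?thesis using a0 a1 by (intro exI[of _ "a1 - a0"]) auto
  qed
  show ?thesis by (rule that[OF _ r near]) simp
qed

lemma approximation:
  obtains M where "0 \<le> M" "\<And>w \<delta>. 0 < \<delta> \<Longrightarrow> \<exists>u. N u \<le> M * norm w \<and> norm (w - u) < \<delta>"
proof -
  obtain k r where k: "0 \<le> k" and r: "0 < r"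
    and near: "\<And>w \<delta>. norm w < r \<Longrightarrow> 0 < \<delta> \<Longrightarrow> \<exists>u. N u \<le> k \<and> norm (w - u) < \<delta>"
    by (rule small_vectors_approximable) blast
  have approx: "\<exists>u. N u \<le> 2 * k / r * norm w \<and> norm (w - u) < \<delta>" if "0 < \<delta>" for w \<delta>
  proof (cases "w = 0")
    case True
    then show ?thesis using that by (intro exI[of _ 0]) simp
  next
    case False
    define t where "t = r / (2 * norm w)"
    have t: "0 < t" "norm (t *\<^sub>R w) < r" using r False by (simp_all add: t_def)
    then obtain u where u: "N u \<le> k" "norm (t *\<^sub>R w - u) < \<delta> * t"
      using near \<open>0 < \<delta>\<close> by (meson mult_pos_pos)
    have "N (u /\<^sub>R t) = N u / t" using scaleR[of "inverse t" u] t by (simp add: divide_inverse_commute)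
    also have "\<dots> \<le> k / t" using u(1) t by (simp add: divide_right_mono)
    also have "\<dots> = 2 * k / r * norm w" using r False by (simp add: t_def field_simps)
    finally have "N (u /\<^sub>R t) \<le> 2 * k / r * norm w" .
    moreover have "norm (w - u /\<^sub>R t) < \<delta>"
    proof -
      have "w - u /\<^sub>R t = inverse t *\<^sub>R (t *\<^sub>R w - u)"
        using t by (simp add: scaleR_diff_right)
      then have "norm (w - u /\<^sub>R t) = inverse t * norm (t *\<^sub>R w - u)" using t by simp
      also have "\<dots> < inverse t * (\<delta> * t)" using u(2) t by simp
      also have "\<dots> = \<delta>" using t by simp
      finally show ?thesis .
    qed
    ultimately show ?thesis by blast
  qed
  show ?thesis by (rule that[OF _ approx]) (use k r in simp)
qed

lemma geometric_decomposition:
  obtains M where "0 \<le> M"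
    and "\<And>w. \<exists>u. (\<lambda>J. \<Sum>j<J. u j) \<longlonglongrightarrow> w \<and> (\<forall>j. N (u j) \<le> M * norm w * (1/2) ^ j)"
proof -
  obtain M where M: "0 \<le> M" "\<And>w \<delta>. 0 < \<delta> \<Longrightarrow> \<exists>u. N u \<le> M * norm w \<and> norm (w - u) < \<delta>"
    by (rule approximation) blast
  define U where "U w \<delta> = (SOME u. N u \<le> M * norm w \<and> norm (w - u) < \<delta>)" for w \<delta>
  have U: "N (U w \<delta>) \<le> M * norm w \<and> norm (w - U w \<delta>) < \<delta>" if "0 < \<delta>" for w \<delta>
    unfolding U_def using M(2)[OF that] by (rule someI_ex)
  have "\<exists>u. (\<lambda>J. \<Sum>j<J. u j) \<longlonglongrightarrow> w \<and> (\<forall>j. N (u j) \<le> M * norm w * (1/2) ^ j)" for w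
  proof (cases "w = 0")
    case True
    then show ?thesis by (intro exI[of _ "\<lambda>_. 0"]) simp
  next
    case False
    define d where "d = norm w"
    have "0 < d" using False by (simp add: d_def)
    \<comment> \<open>Approximate the successive remainders r j to within d / 2 ^ (j + 1).\<close>
    define r where "r = rec_nat w (\<lambda>j r. r - U r (d * (1/2) ^ Suc j))"
    define u where "u j = U (r j) (d * (1/2) ^ Suc j)" for j
    have r_0: "r 0 = w" by (simp add: r_def)
    have r_Suc: "r (Suc j) = r j - u j" for j by (simp add: r_def u_def)
    have U_r: "N (u j) \<le> M * norm (r j) \<and> norm (r (Suc j)) < d * (1/2) ^ Suc j" for j
      using U[of "d * (1/2) ^ Suc j" "r j"] \<open>0 < d\<close> by (simp add: r_Suc u_def)
    have r_small: "norm (r j) \<le> d * (1/2) ^ j" for j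
      using U_r[of "j - 1"] by (cases j) (simp_all add: r_0 d_def)
    have "N (u j) \<le> M * d * (1/2) ^ j" for j
    proof -
      have "N (u j) \<le> M * norm (r j)" using U_r by blast
      also have "\<dots> \<le> M * (d * (1/2) ^ j)" by (rule mult_left_mono[OF r_small M(1)])
      finally show ?thesis by (simp add: mult.assoc)
    qed
    moreover have "(\<lambda>J. \<Sum>j<J. u j) \<longlonglongrightarrow> w"
    proof -
      have partial: "(\<Sum>j<J. u j) = w - r J" for J
        by (induction J) (simp_all add: r_0 r_Suc algebra_simps)
      have null: "(\<lambda>J. d * (1/2) ^ J) \<longlonglongrightarrow> 0"
        by (intro tendsto_mult_right_zero LIMSEQ_power_zero) simp
      have "r \<longlonglongrightarrow> 0"
        by (rule Lim_null_comparison[OF always_eventually null]) (simp add: r_small)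
      from tendsto_diff[OF tendsto_const this] show ?thesis unfolding partial by simp
    qed
    ultimately show ?thesis unfolding d_def by blast
  qed
  with M(1) show ?thesis by (rule that)
qed

lemma partial_sums_Cauchy:
  assumes summable: "summable (\<lambda>j. N (u j))" and "0 < e"
  shows "\<exists>J. \<forall>j\<ge>J. \<forall>l\<ge>J. N ((\<Sum>i<j. u i) - (\<Sum>i<l. u i)) < e"
proof -
  define P where "P J = (\<Sum>j<J. u j)" for J
  have tail: "N (P l - P j) \<le> norm (\<Sum>i\<in>{j..<l}. N (u i))" if "j \<le> l" for j l
  proof -
    have "P l - P j = (\<Sum>i\<in>{j..<l}. u i)"
      using that by (simp add: P_def sum_diff_nat_ivl flip: atLeast0LessThan)
    then show ?thesis using sum_le[of u "{j..<l}"] by simp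
  qed
  obtain J where J: "\<forall>m\<ge>J. \<forall>n. norm (\<Sum>i\<in>{m..<n}. N (u i)) < e"
    using summable \<open>0 < e\<close> unfolding summable_Cauchy by blast
  have "N (P j - P l) < e" if "J \<le> j" "J \<le> l" for j l
  proof (cases "j \<le> l")
    case True
    then show ?thesis
      using tail[of j l] J[rule_format, OF that(1), of l] diff_commute[of "P j" "P l"] by linarith
  next
    case False
    then show ?thesis using tail[of l j] J[rule_format, OF that(2), of j] by linarith
  qed
  then show ?thesis unfolding P_def by blast
qed

lemma le_suminf:
  assumes summable: "summable (\<lambda>j. N (u j))" and sums: "(\<lambda>J. \<Sum>j<J. u j) \<longlonglongrightarrow> w"
  shows "N w \<le> (\<Sum>j. N (u j))"
proof -
  define P where "P J = (\<Sum>j<J. u j)" for J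
  have "\<exists>V. (\<lambda>J. N (P J - V)) \<longlonglongrightarrow> 0"
  proof (rule complete)
    show "\<exists>J. \<forall>j\<ge>J. \<forall>l\<ge>J. N (P j - P l) < e" if "0 < e" for e
      unfolding P_def by (rule partial_sums_Cauchy[OF summable that])
  qed
  then obtain V where V: "(\<lambda>J. N (P J - V)) \<longlonglongrightarrow> 0" by blast
  have "(\<lambda>J. P J - V) \<longlonglongrightarrow> 0"
    by (rule Lim_null_comparison[OF always_eventually V]) (simp add: norm_le)
  then have "P \<longlonglongrightarrow> V" by (rule LIM_zero_cancel)
  then have "V = w" using LIMSEQ_unique sums unfolding P_def by blast
  have bound: "N w \<le> N (P J - w) + (\<Sum>j. N (u j))" for J
  proof -
    have "N w \<le> N (w - P J) + N (P J)" using triangle[of "w - P J" "P J"] by simp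
    also have "N (P J) \<le> (\<Sum>j<J. N (u j))" unfolding P_def by (rule sum_le)
    also have "\<dots> \<le> (\<Sum>j. N (u j))"
      using summable by (intro sum_le_suminf) (simp_all add: nonneg)
    finally show ?thesis by (simp add: diff_commute)
  qed
  have "(\<lambda>J. N (P J - w) + (\<Sum>j. N (u j))) \<longlonglongrightarrow> (\<Sum>j. N (u j))"
    using tendsto_add[OF V[unfolded \<open>V = w\<close>] tendsto_const] by simp
  then show ?thesis by (rule LIMSEQ_le_const) (use bound in auto)
qed

theorem bounded_by_norm: "\<exists>C>0. \<forall>v. N v \<le> C * norm v"
proof -
  obtain M where M: "0 \<le> M"
    and decomposition: "\<And>w. \<exists>u. (\<lambda>J. \<Sum>j<J. u j) \<longlonglongrightarrow> w \<and> (\<forall>j. N (u j) \<le> M * norm w * (1/2) ^ j)"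
    by (rule geometric_decomposition) blast
  have "N w \<le> (2 * M + 1) * norm w" for w
  proof -
    obtain u where sums: "(\<lambda>J. \<Sum>j<J. u j) \<longlonglongrightarrow> w" and small: "\<And>j. N (u j) \<le> M * norm w * (1/2) ^ j"
      using decomposition by blast
    have geometric: "(\<lambda>j. M * norm w * (1/2) ^ j) sums (M * norm w * 2)"
      using geometric_sums[of "1/2 :: real"] sums_mult[of _ 2 "M * norm w"] by simp
    have summable: "summable (\<lambda>j. N (u j))"
    proof (rule summable_comparison_test')
      show "summable (\<lambda>j. M * norm w * (1/2) ^ j)" using geometric by (rule sums_summable)
      show "norm (N (u j)) \<le> M * norm w * (1/2) ^ j" for j using small[of j] by (simp add: nonneg)
    qed
    have "N w \<le> (\<Sum>j. N (u j))" by (rule le_suminf[OF summable sums])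
    also have "\<dots> \<le> (\<Sum>j. M * norm w * (1/2) ^ j)"
      by (rule suminf_le[OF small summable sums_summable[OF geometric]])
    also have "\<dots> = M * norm w * 2" using geometric by (simp add: sums_iff)
    also have "\<dots> \<le> M * norm w * 2 + norm w" by simp
    also have "\<dots> = (2 * M + 1) * norm w" by (simp add: algebra_simps)
    finally show ?thesis .
  qed
  moreover have "0 < 2 * M + 1" using M by simp
  ultimately show ?thesis by blast
qed

end

section \<open>Coordinates and partial sum projections of a Schauder basis\<close>

lemma limit_of_multiples:
  fixes x y :: "'a::real_normed_vector"
  assumes lim: "(\<lambda>j. a j *\<^sub>R x) \<longlonglongrightarrow> y"
  shows "\<exists>c. y = c *\<^sub>R x"
proof (cases "x = 0")
  case True
  then show ?thesis using lim by (simp add: LIMSEQ_const_iff)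
next
  case False
  then have norm_x: "norm x > 0" by simp
  have "Cauchy a"
  proof (rule metric_CauchyI)
    fix e :: real
    assume "e > 0"
    then obtain M where M: "\<forall>j\<ge>M. \<forall>l\<ge>M. dist (a j *\<^sub>R x) (a l *\<^sub>R x) < e * norm x"
      using metric_CauchyD[OF LIMSEQ_imp_Cauchy[OF lim]] norm_x by (meson mult_pos_pos)
    have "dist (a j) (a l) < e" if "M \<le> j" "M \<le> l" for j l
    proof -
      have "dist (a j) (a l) * norm x = dist (a j *\<^sub>R x) (a l *\<^sub>R x)"
        by (simp add: dist_norm flip: scaleR_diff_left)
      then show ?thesis using M that norm_x by (metis mult_less_cancel_right_pos)
    qed
    then show "\<exists>M. \<forall>j\<ge>M. \<forall>l\<ge>M. dist (a j) (a l) < e" by blast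
  qed
  then obtain c where "a \<longlonglongrightarrow> c" by (auto simp: Cauchy_convergent_iff convergent_def)
  then have "(\<lambda>j. a j *\<^sub>R x) \<longlonglongrightarrow> c *\<^sub>R x" by (intro tendsto_scaleR tendsto_const)
  with lim show ?thesis using LIMSEQ_unique by blast
qed

locale schauder =
  fixes x :: "nat \<Rightarrow> 'a::banach"
  assumes basis: "schauder_basis x"
begin

definition coord :: "'a \<Rightarrow> nat \<Rightarrow> real" where
  "coord v = (THE a. (\<lambda>m. \<Sum>i<m. a i *\<^sub>R x i) \<longlonglongrightarrow> v)"

lemma unique_expansion: "\<exists>!a. (\<lambda>m. \<Sum>i<m. a i *\<^sub>R x i) \<longlonglongrightarrow> v"
  using basis unfolding schauder_basis_def by blast

lemma coord_expansion: "(\<lambda>m. \<Sum>i<m. coord v i *\<^sub>R x i) \<longlonglongrightarrow> v"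
  unfolding coord_def using unique_expansion by (rule theI')

lemma coord_unique: "(\<lambda>m. \<Sum>i<m. a i *\<^sub>R x i) \<longlonglongrightarrow> v \<Longrightarrow> coord v = a"
  unfolding coord_def using unique_expansion by (rule the1_equality)

lemma coord_add: "coord (v + w) = (\<lambda>i. coord v i + coord w i)"
proof (rule coord_unique)
  have "(\<lambda>m. (\<Sum>i<m. coord v i *\<^sub>R x i) + (\<Sum>i<m. coord w i *\<^sub>R x i)) \<longlonglongrightarrow> v + w"
    by (intro tendsto_add coord_expansion)
  then show "(\<lambda>m. \<Sum>i<m. (coord v i + coord w i) *\<^sub>R x i) \<longlonglongrightarrow> v + w"
    by (simp add: scaleR_add_left sum.distrib)
qed

lemma coord_scaleR: "coord (c *\<^sub>R v) = (\<lambda>i. c * coord v i)"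
proof (rule coord_unique)
  have "(\<lambda>m. c *\<^sub>R (\<Sum>i<m. coord v i *\<^sub>R x i)) \<longlonglongrightarrow> c *\<^sub>R v"
    by (intro tendsto_scaleR tendsto_const coord_expansion)
  then show "(\<lambda>m. \<Sum>i<m. (c * coord v i) *\<^sub>R x i) \<longlonglongrightarrow> c *\<^sub>R v"
    by (simp add: scaleR_sum_right)
qed

lemma coord_basis_sum:
  assumes "finite A"
  shows "coord (\<Sum>i\<in>A. c i *\<^sub>R x i) = (\<lambda>i. if i \<in> A then c i else 0)"
proof (rule coord_unique)
  obtain L where L: "\<forall>i\<in>A. i < L" using assms finite_nat_bounded by blast
  have "(\<Sum>i<m. (if i \<in> A then c i else 0) *\<^sub>R x i) = (\<Sum>i\<in>A. c i *\<^sub>R x i)" if "L \<le> m" for m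
  proof -
    have "(\<Sum>i<m. (if i \<in> A then c i else 0) *\<^sub>R x i) = (\<Sum>i<m. if i \<in> A then c i *\<^sub>R x i else 0)"
      by (intro sum.cong) auto
    also have "\<dots> = (\<Sum>i\<in>{..<m} \<inter> A. c i *\<^sub>R x i)"
      by (simp add: sum.inter_restrict)
    also have "{..<m} \<inter> A = A" using L that by auto
    finally show ?thesis .
  qed
  then show "(\<lambda>m. \<Sum>i<m. (if i \<in> A then c i else 0) *\<^sub>R x i) \<longlonglongrightarrow> (\<Sum>i\<in>A. c i *\<^sub>R x i)"
    by (intro tendsto_eventually eventually_sequentiallyI[of L]) auto
qed

definition proj :: "nat \<Rightarrow> 'a \<Rightarrow> 'a" where
  "proj m v = (\<Sum>i<m. coord v i *\<^sub>R x i)"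

lemma proj_tendsto: "(\<lambda>m. proj m v) \<longlonglongrightarrow> v"
  unfolding proj_def by (rule coord_expansion)

lemma linear_proj: "linear (proj m)"
  by (rule linearI)
    (simp_all add: proj_def coord_add coord_scaleR scaleR_add_left sum.distrib scaleR_sum_right)

lemma proj_Suc_diff: "proj (Suc i) v - proj i v = coord v i *\<^sub>R x i"
  by (simp add: proj_def)

sublocale proj_family: pointwise_bounded_linear_family "range proj"
proof -
  have "bdd_above ((\<lambda>T. norm (T v)) ` range proj)" for v
  proof -
    have "Bseq (\<lambda>m. proj m v)" using proj_tendsto convergent_imp_Bseq convergentI by blast
    then obtain K where "\<And>m. norm (proj m v) \<le> K" unfolding Bseq_def by blast
    then show ?thesis by (intro bdd_aboveI2) auto
  qed
  then show "pointwise_bounded_linear_family (range proj)"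
    by (intro pointwise_bounded_linear_family.intro) (auto simp: linear_proj)
qed

lemma norm_proj_le_sup_norm: "norm (proj m v) \<le> sup_norm (range proj) v"
  by (rule proj_family.norm_le_sup_norm) (rule rangeI)

lemma norm_le_sup_norm_proj: "norm v \<le> sup_norm (range proj) v"
  by (rule LIMSEQ_le_const2[OF tendsto_norm[OF proj_tendsto]]) (use norm_proj_le_sup_norm in blast)

lemma limit_of_projections:
  assumes "\<And>m. (\<lambda>j. proj m (u j)) \<longlonglongrightarrow> W m"
  obtains c where "\<And>m. W m = (\<Sum>i<m. c i *\<^sub>R x i)"
proof -
  have "\<exists>c. W (Suc i) - W i = c *\<^sub>R x i" for i
  proof (rule limit_of_multiples)
    show "(\<lambda>j. coord (u j) i *\<^sub>R x i) \<longlonglongrightarrow> W (Suc i) - W i"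
      using tendsto_diff[OF assms[of "Suc i"] assms[of i]] by (simp add: proj_Suc_diff)
  qed
  then obtain c where c: "\<And>i. W (Suc i) - W i = c i *\<^sub>R x i" by metis
  have "W 0 = 0" using assms[of 0] by (simp add: proj_def LIMSEQ_const_iff)
  then have "W m = (\<Sum>i<m. c i *\<^sub>R x i)" for m
    by (induction m) (simp_all flip: c)
  then show ?thesis by (rule that)
qed

lemma uniformly_Cauchy_proj:
  assumes Cauchy: "\<And>e. e > 0 \<Longrightarrow> \<exists>J. \<forall>j\<ge>J. \<forall>l\<ge>J. sup_norm (range proj) (u j - u l) < e"
  shows "uniformly_Cauchy_on UNIV (\<lambda>j m. proj m (u j))" and "Cauchy u"
proof -
  show "uniformly_Cauchy_on UNIV (\<lambda>j m. proj m (u j))"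
  proof (rule uniformly_Cauchy_onI)
    fix e :: real
    assume "e > 0"
    then obtain J where J: "\<forall>j\<ge>J. \<forall>l\<ge>J. sup_norm (range proj) (u j - u l) < e" using Cauchy by blast
    have "dist (proj m (u j)) (proj m (u l)) < e" if "J \<le> j" "J \<le> l" for m j l
      using norm_proj_le_sup_norm[of m "u j - u l"] J[rule_format, OF that]
      by (simp add: dist_norm linear_diff[OF linear_proj])
    then show "\<exists>M. \<forall>m\<in>UNIV. \<forall>j\<ge>M. \<forall>l\<ge>M. dist (proj m (u j)) (proj m (u l)) < e" by blast
  qed
  show "Cauchy u"
  proof (rule metric_CauchyI)
    fix e :: real
    assume "e > 0"
    then obtain J where J: "\<forall>j\<ge>J. \<forall>l\<ge>J. sup_norm (range proj) (u j - u l) < e" using Cauchy by blast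
    have "dist (u j) (u l) < e" if "J \<le> j" "J \<le> l" for j l
      using norm_le_sup_norm_proj[of "u j - u l"] J[rule_format, OF that] by (simp add: dist_norm)
    then show "\<exists>M. \<forall>j\<ge>M. \<forall>l\<ge>M. dist (u j) (u l) < e" by blast
  qed
qed

lemma sup_norm_proj_complete:
  assumes Cauchy: "\<And>e. e > 0 \<Longrightarrow> \<exists>J. \<forall>j\<ge>J. \<forall>l\<ge>J. sup_norm (range proj) (u j - u l) < e"
  shows "\<exists>v. (\<lambda>j. sup_norm (range proj) (u j - v)) \<longlonglongrightarrow> 0"
proof -
  obtain W where W: "uniform_limit UNIV (\<lambda>j m. proj m (u j)) W sequentially"
    using Cauchy_uniformly_convergent[OF uniformly_Cauchy_proj(1)[OF Cauchy]]
    unfolding uniformly_convergent_on_def by blast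
  obtain v where v: "u \<longlonglongrightarrow> v"
    using uniformly_Cauchy_proj(2)[OF Cauchy] Cauchy_convergent_iff convergent_def by blast
  have "W \<longlonglongrightarrow> v"
    by (rule swap_uniform_limit'[OF _ v W]) (simp_all add: proj_tendsto)
  obtain c where c: "\<And>m. W m = (\<Sum>i<m. c i *\<^sub>R x i)"
    using limit_of_projections[OF tendsto_uniform_limitI[OF W UNIV_I]] by blast
  have "W = (\<lambda>m. \<Sum>i<m. c i *\<^sub>R x i)" using c by blast
  then have "coord v = c" using \<open>W \<longlonglongrightarrow> v\<close> by (simp add: coord_unique)
  then have proj_v: "proj m v = W m" for m by (simp add: proj_def c)
  have "(\<lambda>j. sup_norm (range proj) (u j - v)) \<longlonglongrightarrow> 0"
  proof (rule tendstoI)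
    fix e :: real
    assume "e > 0"
    then have "\<forall>\<^sub>F j in sequentially. \<forall>m\<in>UNIV. dist (proj m (u j)) (W m) < e / 2"
      by (intro uniform_limitD[OF W]) simp
    then show "\<forall>\<^sub>F j in sequentially. dist (sup_norm (range proj) (u j - v)) 0 < e"
    proof (rule eventually_mono)
      fix j
      assume "\<forall>m\<in>UNIV. dist (proj m (u j)) (W m) < e / 2"
      then have "sup_norm (range proj) (u j - v) \<le> e / 2"
        by (intro proj_family.sup_norm_least)
          (auto simp: dist_norm proj_v linear_diff[OF linear_proj] less_imp_le)
      then show "dist (sup_norm (range proj) (u j - v)) 0 < e"
        using \<open>e > 0\<close> proj_family.sup_norm_nonneg by simp
    qed
  qed
  then show ?thesis by blast
qed

lemma basis_constant:
  obtains K where "K > 0" "\<And>m v. norm (proj m v) \<le> K * norm v"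
proof -
  interpret sup_proj: complete_stronger_norm "sup_norm (range proj)"
  proof unfold_locales
    fix u :: "nat \<Rightarrow> 'a"
    assume "\<And>e. e > 0 \<Longrightarrow> \<exists>J. \<forall>j\<ge>J. \<forall>l\<ge>J. sup_norm (range proj) (u j - u l) < e"
    then show "\<exists>v. (\<lambda>j. sup_norm (range proj) (u j - v)) \<longlonglongrightarrow> 0" by (rule sup_norm_proj_complete)
  qed (simp_all add: norm_le_sup_norm_proj proj_family.sup_norm_triangle proj_family.sup_norm_scaleR)
  obtain C where C: "C > 0" "\<And>v. sup_norm (range proj) v \<le> C * norm v"
    using sup_proj.bounded_by_norm by blast
  show ?thesis by (rule that[OF C(1)]) (rule order_trans[OF norm_proj_le_sup_norm C(2)])
qed

end

section \<open>Sign patterns with few sign changes\<close>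

definition sign_changes :: "(nat \<Rightarrow> real) \<Rightarrow> nat set" where
  "sign_changes g = {i. 0 < i \<and> g (i - 1) * g i < 0}"

definition sign_pattern :: "nat \<Rightarrow> (nat \<Rightarrow> real) \<Rightarrow> bool" where
  "sign_pattern n g \<longleftrightarrow>
     (\<exists>s e. \<forall>i. if s \<le> i \<and> i < e then g i \<in> {-1, 1} else g i = 0) \<and> card (sign_changes g) < n"

lemma sign_patternE:
  assumes "sign_pattern n g"
  obtains s e where "\<And>i. if s \<le> i \<and> i < e then g i \<in> {-1, 1} else g i = 0"
    and "\<And>i. e \<le> i \<Longrightarrow> g i = 0" and "card (sign_changes g) < n"
proof -
  obtain s e where vals: "\<And>i. if s \<le> i \<and> i < e then g i \<in> {-1, 1} else g i = 0"
    and card: "card (sign_changes g) < n"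
    using assms unfolding sign_pattern_def by blast
  have "g i = 0" if "e \<le> i" for i using vals[of i] that by simp
  from vals this card show ?thesis by (rule that)
qed

lemma finite_support_if_vanishing:
  fixes g :: "nat \<Rightarrow> 'a::zero"
  assumes "\<And>i. e \<le> i \<Longrightarrow> g i = 0"
  shows "finite {i. g i \<noteq> 0}"
proof (rule finite_subset)
  show "{i. g i \<noteq> 0} \<subseteq> {..<e}"
  proof
    fix i
    assume "i \<in> {i. g i \<noteq> 0}"
    then show "i \<in> {..<e}" using assms[of i] by (cases "e \<le> i") auto
  qed
qed simp

lemma finite_sign_changes:
  assumes "\<And>i. e \<le> i \<Longrightarrow> g i = 0"
  shows "finite (sign_changes g)"
  by (rule finite_subset[OF _ finite_support_if_vanishing[OF assms]]) (auto simp: sign_changes_def)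

lemma sign_changes_mult: "sign_changes (\<lambda>i. g i * h i) \<subseteq> sign_changes g \<union> sign_changes h"
proof
  fix i
  assume "i \<in> sign_changes (\<lambda>i. g i * h i)"
  then have i: "0 < i" "(g (i - 1) * g i) * (h (i - 1) * h i) < 0"
    by (simp_all add: sign_changes_def mult_ac)
  show "i \<in> sign_changes g \<union> sign_changes h"
  proof (rule ccontr)
    assume "i \<notin> sign_changes g \<union> sign_changes h"
    then have "0 \<le> g (i - 1) * g i" "0 \<le> h (i - 1) * h i" using i(1) by (auto simp: sign_changes_def)
    from mult_nonneg_nonneg[OF this] i(2) show False by linarith
  qed
qed

lemma sign_pattern_abs_le:
  assumes "sign_pattern n g"
  shows "\<bar>g i\<bar> \<le> 1"
proof -
  obtain s e where "\<And>i. if s \<le> i \<and> i < e then g i \<in> {-1, 1} else g i = 0"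
    using assms by (rule sign_patternE) blast
  from this[of i] show ?thesis by (auto split: if_splits)
qed

lemma sign_pattern_finite_sign_changes:
  assumes "sign_pattern n g"
  shows "finite (sign_changes g)"
proof -
  obtain e where "\<And>i. e \<le> i \<Longrightarrow> g i = 0" using assms by (rule sign_patternE) blast
  then show ?thesis by (rule finite_sign_changes)
qed

lemma sign_pattern_finite_support:
  assumes "sign_pattern n g"
  shows "finite {i. g i \<noteq> 0}"
proof -
  obtain e where "\<And>i. e \<le> i \<Longrightarrow> g i = 0" using assms by (rule sign_patternE) blast
  then show ?thesis by (rule finite_support_if_vanishing)
qed

lemma sign_pattern_initial_segment:
  assumes "0 < n"
  shows "sign_pattern n (\<lambda>i. if i < m then 1 else 0)"
proof -
  have "sign_changes (\<lambda>i. if i < m then 1 else 0) = {}" by (auto simp: sign_changes_def)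
  then show ?thesis unfolding sign_pattern_def using assms by (intro conjI exI[of _ 0] exI[of _ m]) auto
qed

lemma sign_pattern_restrict:
  assumes vals: "\<And>i. if s \<le> i \<and> i < e then f i \<in> {-1, 1} else f i = 0"
    and fin: "finite (sign_changes f)"
  shows "card {c\<in>sign_changes f. c < t} < n \<Longrightarrow> sign_pattern n (\<lambda>i. if i < t then f i else 0)"
    and "card {c\<in>sign_changes f. t < c} < n \<Longrightarrow> sign_pattern n (\<lambda>i. if t \<le> i then f i else 0)"
proof -
  let ?g1 = "\<lambda>i. if i < t then f i else 0"
  assume "card {c\<in>sign_changes f. c < t} < n"
  moreover have "sign_changes ?g1 \<subseteq> {c\<in>sign_changes f. c < t}"
    by (auto simp: sign_changes_def split: if_splits)
  then have "card (sign_changes ?g1) \<le> card {c\<in>sign_changes f. c < t}"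
    by (rule card_mono[rotated]) (simp add: fin)
  ultimately have "card (sign_changes ?g1) < n" by linarith
  moreover have "\<forall>i. if s \<le> i \<and> i < min e t then ?g1 i \<in> {-1, 1} else ?g1 i = 0"
  proof
    fix i
    show "if s \<le> i \<and> i < min e t then ?g1 i \<in> {-1, 1} else ?g1 i = 0" using vals[of i] by auto
  qed
  ultimately show "sign_pattern n ?g1" unfolding sign_pattern_def by blast
next
  let ?g2 = "\<lambda>i. if t \<le> i then f i else 0"
  assume "card {c\<in>sign_changes f. t < c} < n"
  moreover have "sign_changes ?g2 \<subseteq> {c\<in>sign_changes f. t < c}"
    by (auto simp: sign_changes_def split: if_splits)
  then have "card (sign_changes ?g2) \<le> card {c\<in>sign_changes f. t < c}"
    by (rule card_mono[rotated]) (simp add: fin)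
  ultimately have "card (sign_changes ?g2) < n" by linarith
  moreover have "\<forall>i. if max s t \<le> i \<and> i < e then ?g2 i \<in> {-1, 1} else ?g2 i = 0"
  proof
    fix i
    show "if max s t \<le> i \<and> i < e then ?g2 i \<in> {-1, 1} else ?g2 i = 0" using vals[of i] by auto
  qed
  ultimately show "sign_pattern n ?g2" unfolding sign_pattern_def by blast
qed

lemma exists_balanced_split:
  fixes C :: "nat set"
  assumes "finite C" and card: "card C + 2 \<le> 2 * n"
  obtains t where "card {c\<in>C. c < t} < n" and "card {c\<in>C. t < c} < n"
proof -
  obtain B where "\<forall>c\<in>C. c \<le> B" using assms(1) finite_nat_set_iff_bounded_le by blast
  then have empty: "{c\<in>C. B < c} = {}" by auto
  have "0 < n" using card by linarith
  then have ex: "card {c\<in>C. B < c} < n" by (simp only: empty card.empty)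
  define t where "t = (LEAST t. card {c\<in>C. t < c} < n)"
  have upper: "card {c\<in>C. t < c} < n"
    unfolding t_def using ex by (rule LeastI)
  have lower: "card {c\<in>C. c < t} < n"
  proof (cases t)
    case 0
    then show ?thesis using \<open>0 < n\<close> by simp
  next
    case (Suc t')
    then have "t' < (LEAST t. card {c\<in>C. t < c} < n)" by (simp add: t_def)
    then have "\<not> card {c\<in>C. t' < c} < n" by (rule not_less_Least)
    moreover have "card C = card ({c\<in>C. c < t} \<union> {c\<in>C. t' < c})"
      using Suc by (intro arg_cong[where f = card]) auto
    moreover have "\<dots> = card {c\<in>C. c < t} + card {c\<in>C. t' < c}"
      using assms(1) Suc by (intro card_Un_disjoint) auto
    ultimately show ?thesis using card by linarith
  qed
  from lower upper show ?thesis by (rule that)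
qed

lemma sign_pattern_mult_split:
  assumes g: "sign_pattern n g" and h: "sign_pattern n h"
  obtains g1 g2 where "sign_pattern n g1" "sign_pattern n g2" "\<And>i. g i * h i = g1 i + g2 i"
proof -
  define f where "f i = g i * h i" for i
  obtain s1 e1 where g_vals: "\<And>i. if s1 \<le> i \<and> i < e1 then g i \<in> {-1, 1} else g i = 0"
    using g by (rule sign_patternE) blast
  obtain s2 e2 where h_vals: "\<And>i. if s2 \<le> i \<and> i < e2 then h i \<in> {-1, 1} else h i = 0"
    using h by (rule sign_patternE) blast
  have f_vals: "if max s1 s2 \<le> i \<and> i < min e1 e2 then f i \<in> {-1, 1} else f i = 0" for i
    using g_vals[of i] h_vals[of i] by (auto simp: f_def split: if_splits)
  have "f i = 0" if "min e1 e2 \<le> i" for i using f_vals[of i] that by (auto simp: min_le_iff_disj)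
  then have fin: "finite (sign_changes f)" by (rule finite_sign_changes)
  have "card (sign_changes f) \<le> card (sign_changes g \<union> sign_changes h)"
    unfolding f_def using sign_changes_mult
    by (rule card_mono[rotated])
      (simp add: sign_pattern_finite_sign_changes[OF g] sign_pattern_finite_sign_changes[OF h])
  also have "\<dots> \<le> card (sign_changes g) + card (sign_changes h)" by (rule card_Un_le)
  finally have "card (sign_changes f) + 2 \<le> 2 * n"
    using g h unfolding sign_pattern_def by linarith
  with fin obtain t
    where "card {c\<in>sign_changes f. c < t} < n" "card {c\<in>sign_changes f. t < c} < n"
    by (rule exists_balanced_split)
  then have "sign_pattern n (\<lambda>i. if i < t then f i else 0)" "sign_pattern n (\<lambda>i. if t \<le> i then f i else 0)"
    using sign_pattern_restrict[OF f_vals fin] by blast+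
  moreover have "g i * h i = (if i < t then f i else 0) + (if t \<le> i then f i else 0)" for i
    by (simp add: f_def)
  ultimately show ?thesis by (rule that)
qed

lemma sign_pattern_jump_sum:
  assumes "sign_pattern n g"
  shows "(\<Sum>i\<in>{1..L}. \<bar>g (i - 1) - g i\<bar>) \<le> 2 * (real n + 1)"
proof -
  obtain s e where vals: "\<And>i. if s \<le> i \<and> i < e then g i \<in> {-1, 1} else g i = 0"
    and changes: "card (sign_changes g) < n"
    using assms by (rule sign_patternE) blast
  define D where "D = {i\<in>{1..L}. g (i - 1) \<noteq> g i}"
  have "D \<subseteq> {s, e} \<union> sign_changes g"
  proof
    fix i
    assume "i \<in> D"
    then have "1 \<le> i" "g (i - 1) \<noteq> g i" by (auto simp: D_def)
    with vals[of i] vals[of "i - 1"] show "i \<in> {s, e} \<union> sign_changes g"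
      by (auto simp: sign_changes_def split: if_splits)
  qed
  then have "card D \<le> card ({s, e} \<union> sign_changes g)"
    by (rule card_mono[rotated]) (simp add: sign_pattern_finite_sign_changes[OF assms])
  also have "\<dots> \<le> card {s, e} + card (sign_changes g)" by (rule card_Un_le)
  also have "card {s, e} \<le> 2" by (simp add: card_insert_le_m1)
  finally have card_D: "card D \<le> n + 1" using changes by linarith
  have "(\<Sum>i\<in>{1..L}. \<bar>g (i - 1) - g i\<bar>) = (\<Sum>i\<in>D. \<bar>g (i - 1) - g i\<bar>)"
    by (rule sum.mono_neutral_right) (auto simp: D_def)
  also have "\<dots> \<le> (\<Sum>i\<in>D. 2)"
  proof (rule sum_mono)
    fix i
    show "\<bar>g (i - 1) - g i\<bar> \<le> 2"
      using sign_pattern_abs_le[OF assms, of i] sign_pattern_abs_le[OF assms, of "i - 1"] by linarith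
  qed
  also have "\<dots> \<le> 2 * (real n + 1)" using card_D by simp
  finally show ?thesis .
qed

section \<open>Multipliers and the norms defined by sign patterns\<close>

lemma sum_by_parts:
  fixes S :: "nat \<Rightarrow> 'a::real_vector"
  shows "(\<Sum>i<L. g i *\<^sub>R (S (Suc i) - S i)) =
    (\<Sum>i\<in>{1..L}. (g (i - 1) - g i) *\<^sub>R S i) + g L *\<^sub>R S L - g 0 *\<^sub>R S 0"
  by (induction L) (simp_all add: algebra_simps)

context schauder
begin

definition multiplier :: "(nat \<Rightarrow> real) \<Rightarrow> 'a \<Rightarrow> 'a" where
  "multiplier g v = (\<Sum>i | g i \<noteq> 0. (g i * coord v i) *\<^sub>R x i)"

lemma multiplier_eq_sum:
  assumes "finite A" "{i. g i \<noteq> 0} \<subseteq> A"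
  shows "multiplier g v = (\<Sum>i\<in>A. (g i * coord v i) *\<^sub>R x i)"
  unfolding multiplier_def using assms by (intro sum.mono_neutral_left) auto

lemma linear_multiplier: "linear (multiplier g)"
  by (rule linearI)
    (simp_all add: multiplier_def coord_add coord_scaleR distrib_left scaleR_add_left sum.distrib
      scaleR_sum_right algebra_simps)

lemma multiplier_basis_sum:
  assumes "finite A" "finite {i. g i \<noteq> 0}"
  shows "multiplier g (\<Sum>i\<in>A. b i *\<^sub>R x i) = (\<Sum>i\<in>A. (g i * b i) *\<^sub>R x i)"
proof -
  have "multiplier g (\<Sum>i\<in>A. b i *\<^sub>R x i) =
      (\<Sum>i\<in>A \<union> {i. g i \<noteq> 0}. (g i * (if i \<in> A then b i else 0)) *\<^sub>R x i)"
    using assms by (simp add: multiplier_eq_sum[of "A \<union> {i. g i \<noteq> 0}"] coord_basis_sum)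
  also have "\<dots> = (\<Sum>i\<in>A. (g i * b i) *\<^sub>R x i)"
    using assms by (intro sum.mono_neutral_cong_right) auto
  finally show ?thesis .
qed

lemma multiplier_multiplier:
  assumes "finite {i. g i \<noteq> 0}" "finite {i. h i \<noteq> 0}"
  shows "multiplier g (multiplier h v) = multiplier (\<lambda>i. g i * h i) v"
proof -
  have "multiplier g (multiplier h v) = (\<Sum>i | h i \<noteq> 0. (g i * (h i * coord v i)) *\<^sub>R x i)"
    unfolding multiplier_def[of h] using assms by (simp add: multiplier_basis_sum)
  also have "\<dots> = (\<Sum>i | h i \<noteq> 0. ((g i * h i) * coord v i) *\<^sub>R x i)"
    by (simp add: mult.assoc)
  also have "\<dots> = multiplier (\<lambda>i. g i * h i) v"
    using assms(2) by (intro multiplier_eq_sum[symmetric]) auto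
  finally show ?thesis .
qed

lemma multiplier_add:
  assumes "finite {i. g i \<noteq> 0}" "finite {i. h i \<noteq> 0}"
  shows "multiplier (\<lambda>i. g i + h i) v = multiplier g v + multiplier h v"
proof -
  let ?A = "{i. g i \<noteq> 0} \<union> {i. h i \<noteq> 0}"
  have "multiplier (\<lambda>i. g i + h i) v = (\<Sum>i\<in>?A. ((g i + h i) * coord v i) *\<^sub>R x i)"
    using assms by (intro multiplier_eq_sum) auto
  also have "\<dots> = multiplier g v + multiplier h v"
    using assms by (simp add: multiplier_eq_sum[of ?A] distrib_right scaleR_add_left sum.distrib)
  finally show ?thesis .
qed

lemma multiplier_initial_segment: "multiplier (\<lambda>i. if i < m then 1 else 0) v = proj m v"
  by (subst multiplier_eq_sum[of "{..<m}"]) (auto simp: proj_def)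

lemma norm_multiplier_le:
  assumes K: "0 \<le> K" "\<And>m v. norm (proj m v) \<le> K * norm v" and g: "sign_pattern n g"
  shows "norm (multiplier g v) \<le> 2 * (real n + 1) * K * norm v"
proof -
  obtain L where L: "\<And>i. L \<le> i \<Longrightarrow> g i = 0" using g by (rule sign_patternE) blast
  have "multiplier g v = (\<Sum>i<L. g i *\<^sub>R (proj (Suc i) v - proj i v))"
    using L by (subst multiplier_eq_sum[of "{..<L}"]) (auto simp: proj_Suc_diff not_less[symmetric])
  also have "\<dots> = (\<Sum>i\<in>{1..L}. (g (i - 1) - g i) *\<^sub>R proj i v)"
    using sum_by_parts[of g "\<lambda>i. proj i v" L] L[of L] by (simp add: proj_def)
  finally have "norm (multiplier g v) \<le> (\<Sum>i\<in>{1..L}. \<bar>g (i - 1) - g i\<bar> * norm (proj i v))"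
    by (simp add: order_trans[OF norm_sum])
  also have "\<dots> \<le> (\<Sum>i\<in>{1..L}. \<bar>g (i - 1) - g i\<bar> * (K * norm v))"
    by (intro sum_mono mult_left_mono K(2)) simp
  also have "\<dots> = (\<Sum>i\<in>{1..L}. \<bar>g (i - 1) - g i\<bar>) * (K * norm v)"
    by (simp add: sum_distrib_right)
  also have "\<dots> \<le> 2 * (real n + 1) * (K * norm v)"
    using K(1) by (intro mult_right_mono sign_pattern_jump_sum[OF g]) simp
  finally show ?thesis by (simp add: mult.assoc)
qed

definition pattern_norm :: "nat \<Rightarrow> 'a \<Rightarrow> real" where
  "pattern_norm n = sup_norm (multiplier ` Collect (sign_pattern n))"

lemma pointwise_bounded_multipliers:
  assumes "0 < n"
  shows "pointwise_bounded_linear_family (multiplier ` Collect (sign_pattern n))"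
proof -
  obtain K where K: "K > 0" "\<And>m v. norm (proj m v) \<le> K * norm v" by (rule basis_constant) blast
  have "bdd_above ((\<lambda>T. norm (T v)) ` multiplier ` Collect (sign_pattern n))" for v
    using norm_multiplier_le[OF less_imp_le[OF K(1)] K(2)] by (intro bdd_aboveI2) auto
  moreover have "multiplier ` Collect (sign_pattern n) \<noteq> {}"
    using sign_pattern_initial_segment[OF assms] by blast
  ultimately show ?thesis
    by (intro pointwise_bounded_linear_family.intro) (auto simp: linear_multiplier)
qed

lemma norm_multiplier_le_pattern_norm:
  "sign_pattern n g \<Longrightarrow> norm (multiplier g v) \<le> pattern_norm n v"
  unfolding pattern_norm_def
  by (rule pointwise_bounded_linear_family.norm_le_sup_norm[OF pointwise_bounded_multipliers])
    (auto simp: sign_pattern_def)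

lemma pattern_norm_least:
  "0 < n \<Longrightarrow> (\<And>g. sign_pattern n g \<Longrightarrow> norm (multiplier g v) \<le> B) \<Longrightarrow> pattern_norm n v \<le> B"
  unfolding pattern_norm_def
  by (rule pointwise_bounded_linear_family.sup_norm_least[OF pointwise_bounded_multipliers]) auto

lemma equivalent_norm_pattern_norm:
  assumes "0 < n"
  shows "equivalent_norm (pattern_norm n)"
proof -
  obtain K where K: "K > 0" "\<And>m v. norm (proj m v) \<le> K * norm v" by (rule basis_constant) blast
  have "norm (proj m v) \<le> pattern_norm n v" for m v
    using norm_multiplier_le_pattern_norm[OF sign_pattern_initial_segment[OF assms]]
    by (simp add: multiplier_initial_segment)
  then have "norm v \<le> pattern_norm n v" for v
    by (intro LIMSEQ_le_const2[OF tendsto_norm[OF proj_tendsto]]) auto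
  then show ?thesis
    unfolding pattern_norm_def
    using norm_multiplier_le[OF less_imp_le[OF K(1)] K(2)] K(1) assms
    by (intro pointwise_bounded_linear_family.equivalent_norm_sup_norm
          [OF pointwise_bounded_multipliers[OF assms], where C = "2 * (real n + 1) * K"])
      (auto simp: pattern_norm_def)
qed

lemma pattern_norm_multiplier_le:
  assumes E: "sign_pattern n E"
  shows "pattern_norm n (multiplier E v) \<le> 2 * pattern_norm n v"
proof -
  have "0 < n" using E by (auto simp: sign_pattern_def)
  show ?thesis
  proof (rule pattern_norm_least[OF \<open>0 < n\<close>])
    fix g
    assume g: "sign_pattern n g"
    obtain g1 g2 where g12: "sign_pattern n g1" "sign_pattern n g2" "\<And>i. g i * E i = g1 i + g2 i"
      using sign_pattern_mult_split[OF g E] by blast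
    have "multiplier g (multiplier E v) = multiplier (\<lambda>i. g1 i + g2 i) v"
      using g E by (simp add: multiplier_multiplier sign_pattern_finite_support g12(3))
    also have "\<dots> = multiplier g1 v + multiplier g2 v"
      using g12 by (simp add: multiplier_add sign_pattern_finite_support)
    finally have "norm (multiplier g (multiplier E v)) \<le> norm (multiplier g1 v) + norm (multiplier g2 v)"
      by (simp add: norm_triangle_ineq)
    also have "\<dots> \<le> 2 * pattern_norm n v"
      using norm_multiplier_le_pattern_norm[OF g12(1), of v]
        norm_multiplier_le_pattern_norm[OF g12(2), of v]
      by linarith
    finally show "norm (multiplier g (multiplier E v)) \<le> 2 * pattern_norm n v" .
  qed
qed

end

section \<open>Sign changes of block bases\<close>

definition blockwise :: "(nat \<Rightarrow> nat) \<Rightarrow> nat \<Rightarrow> (nat \<Rightarrow> real) \<Rightarrow> nat \<Rightarrow> real" where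
  "blockwise p n f i = (\<Sum>k<n. if p k \<le> i \<and> i < p (Suc k) then f k else 0)"

lemma block_exists:
  fixes p :: "nat \<Rightarrow> nat"
  assumes "strict_mono p" "p 0 \<le> i" "i < p n"
  obtains k where "k < n" "p k \<le> i" "i < p (Suc k)"
proof -
  have "\<exists>k<n. p k \<le> i \<and> i < p (Suc k)"
    using assms(3)
  proof (induction n)
    case (Suc n)
    show ?case
    proof (cases "i < p n")
      case True
      then show ?thesis using Suc.IH less_SucI by blast
    next
      case False
      then show ?thesis using Suc.prems by (intro exI[of _ n]) (simp add: not_less)
    qed
  qed (use assms(2) in simp)
  then show ?thesis using that by blast
qed

lemma blockwise_in_block:
  assumes p: "strict_mono p" and k: "k < n" "p k \<le> i" "i < p (Suc k)"
  shows "blockwise p n f i = f k"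
proof -
  have "(if p l \<le> i \<and> i < p (Suc l) then f l else 0) = (if l = k then f l else 0)" for l
  proof (cases "l = k")
    case False
    then consider "Suc l \<le> k" | "Suc k \<le> l" by linarith
    then have "\<not> (p l \<le> i \<and> i < p (Suc l))"
    proof cases
      case 1
      then have "p (Suc l) \<le> p k" using p by (simp add: strict_mono_less_eq)
      then show ?thesis using k(2) by simp
    next
      case 2
      then have "p (Suc k) \<le> p l" using p by (simp add: strict_mono_less_eq)
      then show ?thesis using k(3) by simp
    qed
    then show ?thesis using False by auto
  qed (use k in simp)
  then show ?thesis using k(1) by (simp add: blockwise_def)
qed

lemma blockwise_outside:
  assumes p: "strict_mono p" and i: "\<not> (p 0 \<le> i \<and> i < p n)"
  shows "blockwise p n f i = 0"
  unfolding blockwise_def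
proof (rule sum.neutral, rule ballI)
  fix k
  assume "k \<in> {..<n}"
  then have "p 0 \<le> p k" "p (Suc k) \<le> p n" using p by (simp_all add: strict_mono_less_eq)
  then show "(if p k \<le> i \<and> i < p (Suc k) then f k else 0) = 0" using i by auto
qed

lemma sign_pattern_blockwise:
  assumes p: "strict_mono p" and "0 < n" and signs: "\<forall>k<n. \<epsilon> k \<in> {-1, 1}"
  shows "sign_pattern n (blockwise p n \<epsilon>)"
proof -
  let ?E = "blockwise p n \<epsilon>"
  have vals: "if p 0 \<le> i \<and> i < p n then ?E i \<in> {-1, 1} else ?E i = 0" for i
  proof (cases "p 0 \<le> i \<and> i < p n")
    case True
    then obtain k where "k < n" "p k \<le> i" "i < p (Suc k)" using block_exists[OF p] by blast
    then show ?thesis using True signs blockwise_in_block[OF p] by simp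
  next
    case False
    then show ?thesis by (simp add: blockwise_outside[OF p False])
  qed
  have "sign_changes ?E \<subseteq> p ` {1..<n}"
  proof
    fix i
    assume "i \<in> sign_changes ?E"
    then have i: "0 < i" "?E (i - 1) * ?E i < 0" by (auto simp: sign_changes_def)
    then have "?E (i - 1) \<noteq> 0" "?E i \<noteq> 0" by auto
    then have "p 0 \<le> i - 1" "p 0 \<le> i" "i < p n" using blockwise_outside[OF p] by blast+
    then obtain k where k: "k < n" "p k \<le> i" "i < p (Suc k)" using block_exists[OF p] by blast
    have "p k = i"
    proof (rule ccontr)
      assume "p k \<noteq> i"
      then have "?E (i - 1) = \<epsilon> k" "?E i = \<epsilon> k" using k by (auto intro!: blockwise_in_block[OF p])
      then show False using i(2) signs k(1) by auto
    qed
    moreover have "k \<noteq> 0" using \<open>p 0 \<le> i - 1\<close> \<open>p k = i\<close> i(1) by (cases k) auto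
    ultimately show "i \<in> p ` {1..<n}" using k(1) by auto
  qed
  then have "card (sign_changes ?E) \<le> card (p ` {1..<n})" by (rule card_mono[rotated]) simp
  also have "\<dots> \<le> card {1..<n}" by (rule card_image_le) simp
  also have "\<dots> < n" using \<open>0 < n\<close> by simp
  finally show ?thesis unfolding sign_pattern_def using vals by blast
qed

context schauder
begin

lemma multiplier_blockwise_block:
  assumes p: "strict_mono p" and "k < n"
  shows "multiplier (blockwise p n \<epsilon>) (\<Sum>i\<in>{p k..<p (Suc k)}. b i *\<^sub>R x i) =
    \<epsilon> k *\<^sub>R (\<Sum>i\<in>{p k..<p (Suc k)}. b i *\<^sub>R x i)"
proof -
  have "finite {i. blockwise p n \<epsilon> i \<noteq> 0}"
    by (rule finite_support_if_vanishing[of "p n"]) (simp add: blockwise_outside[OF p])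
  then have "multiplier (blockwise p n \<epsilon>) (\<Sum>i\<in>{p k..<p (Suc k)}. b i *\<^sub>R x i) =
      (\<Sum>i\<in>{p k..<p (Suc k)}. (blockwise p n \<epsilon> i * b i) *\<^sub>R x i)"
    by (simp add: multiplier_basis_sum)
  also have "\<dots> = (\<Sum>i\<in>{p k..<p (Suc k)}. (\<epsilon> k * b i) *\<^sub>R x i)"
    using assms by (intro sum.cong) (simp_all add: blockwise_in_block)
  finally show ?thesis by (simp add: scaleR_sum_right)
qed

lemma block_n_unconditional_pattern_norm:
  assumes "0 < n"
  shows "block_n_unconditional (pattern_norm n) x n 2"
  unfolding block_n_unconditional_def
proof (intro allI impI)
  fix y and a \<epsilon> :: "nat \<Rightarrow> real"
  assume "block_basis_of x n y" and signs: "\<forall>k<n. \<epsilon> k \<in> {-1, 1}"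
  then obtain p b where p: "strict_mono p"
    and y: "\<forall>k<n. y k = (\<Sum>i\<in>{p k..<p (Suc k)}. b i *\<^sub>R x i)"
    unfolding block_basis_of_def by blast
  let ?E = "blockwise p n \<epsilon>"
  have "multiplier ?E (\<Sum>k<n. a k *\<^sub>R y k) = (\<Sum>k<n. a k *\<^sub>R multiplier ?E (y k))"
    by (simp add: linear_sum[OF linear_multiplier] linear_scale[OF linear_multiplier])
  also have "\<dots> = (\<Sum>k<n. (\<epsilon> k * a k) *\<^sub>R y k)"
    using y by (intro sum.cong) (simp_all add: multiplier_blockwise_block[OF p])
  finally have "multiplier ?E (\<Sum>k<n. a k *\<^sub>R y k) = (\<Sum>k<n. (\<epsilon> k * a k) *\<^sub>R y k)" .
  then show
    "pattern_norm n (\<Sum>k<n. (\<epsilon> k * a k) *\<^sub>R y k) \<le> 2 * pattern_norm n (\<Sum>k<n. a k *\<^sub>R y k)"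
    using pattern_norm_multiplier_le[OF sign_pattern_blockwise[OF p assms signs],
        of "\<Sum>k<n. a k *\<^sub>R y k"]
    by simp
qed

end

theorem lemma2p2:
  fixes x :: "nat \<Rightarrow> 'a::banach"
  assumes "schauder_basis x"
  shows "\<forall>n::nat. \<exists>N::'a \<Rightarrow> real. equivalent_norm N \<and> block_n_unconditional N x n 2"
proof
  fix n :: nat
  interpret schauder x using assms by (rule schauder.intro)
  show "\<exists>N::'a \<Rightarrow> real. equivalent_norm N \<and> block_n_unconditional N x n 2"
  proof (cases "n = 0")
    case True
    \<comment> \<open>There are no sign patterns for n = 0, so use pattern_norm 1; the condition is vacuous.\<close>
    have "equivalent_norm (pattern_norm 1)" by (rule equivalent_norm_pattern_norm) simp
    moreover from this have "block_n_unconditional (pattern_norm 1) x n 2"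
      using True by (simp add: block_n_unconditional_def equivalent_norm_def is_norm_def)
    ultimately show ?thesis by blast
  next
    case False
    then show ?thesis using equivalent_norm_pattern_norm block_n_unconditional_pattern_norm by blast
  qed
qed

end
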